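(* Let $a(s)=s^n+a_1s^{n-1}+\cdots+a_n$ and $b(s)=s^n+b_1s^{n-1}+\cdots+b_n$ be real Hurwitz stable polynomials of degree $n$, and let $c(s)=s^{n-1}+x_1s^{n-2}+\cdots+x_{n-1}$ be a real polynomial such that $\mathrm{Re}\left[\frac{c(j\omega)}{a(j\omega)}\right]>0$ and $\mathrm{Re}\left[\frac{c(j\omega)}{b(j\omega)}\right]>0$ for all $\omega\in\mathbb{R}$. Let $h(s)$ be any monic real polynomial of degree $n$ and set $\tilde c(s):=c(s)+\delta h(s)$. Then there exists $\delta_0>0$ such that for every $\delta\in(0,\delta_0)$ both $\tilde c(s)/a(s)$ and $\tilde c(s)/b(s)$ are strictly positive real.
   Context: A real polynomial is Hurwitz stable if all its roots lie in the open left half-plane. A rational function $f(s)=p(s)/q(s)$ with $p,q$ real polynomials is strictly positive real if (i) $\deg p=\deg q$; (ii) $q$ is Hurwitz stable; (iii) $\mathrm{Re}[f(j\omega)]>0$ for all $\omega\in\mathbb{R}$. *)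

theory Defs
  imports "HOL-Analysis.Analysis" "HOL-Computational_Algebra.Polynomial"
begin

definition hurwitz_stable :: "real poly \<Rightarrow> bool" where
  "hurwitz_stable q \<longleftrightarrow> q \<noteq> 0 \<and>
     (\<forall>z::complex. poly (map_poly complex_of_real q) z = 0 \<longrightarrow> Re z < 0)"

definition strictly_positive_real :: "real poly \<Rightarrow> real poly \<Rightarrow> bool" where
  "strictly_positive_real p q \<longleftrightarrow>
     degree p = degree q \<and> hurwitz_stable q \<and>
     (\<forall>\<omega>::real. Re (poly (map_poly complex_of_real p) (\<i> * complex_of_real \<omega>) /
                     poly (map_poly complex_of_real q) (\<i> * complex_of_real \<omega>)) > 0)"

end

theory Submission
  imports Defs
begin

text \<open>On the imaginary axis h(j\<omega>)/a(j\<omega>) tends to 1 as |\<omega>| \<rightarrow> \<infinity>, because h and a are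
  monic of the same degree. Hence Re(h/a) is positive outside some compact interval, while on
  that interval Re(c/a) has a positive minimum and Re(h/a) is bounded. Consequently
  Re((c + \<delta>h)/a) = Re(c/a) + \<delta> Re(h/a) stays positive for all small \<delta> > 0, and the same holds
  with b in place of a. Since deg c < n, the numerator c + \<delta>h has degree n.\<close>

abbreviation freq_resp :: "real poly \<Rightarrow> real poly \<Rightarrow> real \<Rightarrow> complex" where
  "freq_resp p q \<omega> \<equiv> poly (map_poly complex_of_real p) (\<i> * complex_of_real \<omega>) /
                      poly (map_poly complex_of_real q) (\<i> * complex_of_real \<omega>)"

lemma positive_under_small_perturbation:
  fixes g k :: "'a::{real_normed_vector, heine_borel} \<Rightarrow> real"
  assumes g_cont: "continuous_on UNIV g" and k_cont: "continuous_on UNIV k"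
    and g_pos: "\<And>x. g x > 0"
    and k_nonneg: "eventually (\<lambda>x. k x \<ge> 0) at_infinity"
  shows "\<exists>\<delta>0>0. \<forall>\<delta>. 0 < \<delta> \<and> \<delta> < \<delta>0 \<longrightarrow> (\<forall>x. g x + \<delta> * k x > 0)"
proof -
  obtain r where r: "\<And>x. norm x \<ge> r \<Longrightarrow> k x \<ge> 0"
    using k_nonneg unfolding eventually_at_infinity by blast
  define K where "K = cball (0::'a) \<bar>r\<bar>"
  have K: "compact K" "K \<noteq> {}"
    unfolding K_def by auto
  obtain x0 where "x0 \<in> K" and x0_min: "\<And>x. x \<in> K \<Longrightarrow> g x0 \<le> g x"
    using continuous_attains_inf[OF K continuous_on_subset[OF g_cont]] by auto
  obtain B where "B > 0" and B: "\<And>x. x \<in> K \<Longrightarrow> \<bar>k x\<bar> \<le> B"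
    using compact_imp_bounded[OF compact_continuous_image[OF continuous_on_subset[OF k_cont] K(1)]]
    unfolding bounded_pos by auto
  show ?thesis
  proof (intro exI[of _ "g x0 / B"] conjI allI impI)
    show "g x0 / B > 0"
      using g_pos \<open>B > 0\<close> by simp
    fix \<delta> :: real and x :: 'a
    assume \<delta>: "0 < \<delta> \<and> \<delta> < g x0 / B"
    show "g x + \<delta> * k x > 0"
    proof (cases "x \<in> K")
      case True
      have "\<delta> * B < g x0"
        using \<delta> \<open>B > 0\<close> by (simp add: pos_less_divide_eq)
      moreover have "\<delta> * (- k x) \<le> \<delta> * B"
        using B[OF True] \<delta> by (intro mult_left_mono) auto
      ultimately show ?thesis
        using x0_min[OF True] by linarith
    next
      case False
      then have "k x \<ge> 0"
        using r unfolding K_def by auto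
      then show ?thesis
        using g_pos[of x] \<delta> by (simp add: add_pos_nonneg)
    qed
  qed
qed

lemma poly_ratio_tendsto_lead_coeff_ratio:
  fixes p q :: "'a::real_normed_field poly"
  assumes "degree p = degree q" "q \<noteq> 0"
  shows "((\<lambda>z. poly p z / poly q z) \<longlongrightarrow> lead_coeff p / lead_coeff q) at_infinity"
proof -
  have "eventually (\<lambda>z::'a. z \<noteq> 0) at_infinity"
    by (rule eventually_at_infinityI[of 1]) auto
  then have "eventually (\<lambda>z. (poly p z / z ^ degree p) / (poly q z / z ^ degree q) = poly p z / poly q z)
               at_infinity"
    by (rule eventually_mono) (simp add: assms(1))
  moreover have "((\<lambda>z. (poly p z / z ^ degree p) / (poly q z / z ^ degree q))
                   \<longlongrightarrow> lead_coeff p / lead_coeff q) at_infinity"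
    using assms(2) by (intro tendsto_divide poly_divide_tendsto_aux) auto
  ultimately show ?thesis
    by (rule Lim_transform_eventually[rotated])
qed

lemma map_poly_of_real_add:
  "map_poly of_real (p + q) = (map_poly of_real p + map_poly of_real q :: 'a::real_algebra_1 poly)"
  by (rule poly_eqI) (simp add: coeff_map_poly)

lemma Re_freq_resp_add_smult:
  "Re (freq_resp (c + smult \<delta> h) q \<omega>) = Re (freq_resp c q \<omega>) + \<delta> * Re (freq_resp h q \<omega>)"
  by (simp add: map_poly_of_real_add map_poly_smult add_divide_distrib flip: times_divide_eq_right)

lemma hurwitz_stable_imp_nonzero_on_imag_axis:
  "hurwitz_stable q \<Longrightarrow> poly (map_poly complex_of_real q) (\<i> * complex_of_real \<omega>) \<noteq> 0"
  unfolding hurwitz_stable_def by fastforce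

lemma continuous_on_Re_freq_resp:
  "hurwitz_stable q \<Longrightarrow> continuous_on UNIV (\<lambda>\<omega>. Re (freq_resp p q \<omega>))"
  using hurwitz_stable_imp_nonzero_on_imag_axis by (intro continuous_intros) auto

lemma eventually_Re_freq_resp_pos:
  assumes "degree h = degree q" "q \<noteq> 0" "lead_coeff h / lead_coeff q > 0"
  shows "eventually (\<lambda>\<omega>. Re (freq_resp h q \<omega>) > 0) at_infinity"
proof -
  let ?H = "map_poly complex_of_real h" and ?Q = "map_poly complex_of_real q"
  have "?Q \<noteq> 0"
    using assms(2) by (simp add: map_poly_eq_0_iff)
  then have "((\<lambda>z. poly ?H z / poly ?Q z) \<longlongrightarrow> lead_coeff ?H / lead_coeff ?Q) at_infinity"
    using assms(1) by (intro poly_ratio_tendsto_lead_coeff_ratio) (simp_all add: degree_map_poly)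
  also have "lead_coeff ?H / lead_coeff ?Q = complex_of_real (lead_coeff h / lead_coeff q)"
    by (simp add: degree_map_poly coeff_map_poly)
  finally have ratio_lim: "((\<lambda>z. poly ?H z / poly ?Q z)
                             \<longlongrightarrow> complex_of_real (lead_coeff h / lead_coeff q)) at_infinity" .
  have "filterlim (\<lambda>\<omega>::real. \<i> * complex_of_real \<omega>) at_infinity at_infinity"
    unfolding filterlim_at_infinity_conv_norm_at_top
    using filterlim_norm_at_top[where 'a=real] by (simp add: norm_mult real_norm_def[abs_def])
  from tendsto_Re[OF filterlim_compose[OF ratio_lim this]]
  have "((\<lambda>\<omega>. Re (freq_resp h q \<omega>)) \<longlongrightarrow> lead_coeff h / lead_coeff q) at_infinity"
    by simp
  then show ?thesis
    using assms(3) by (rule order_tendstoD)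
qed

lemma strictly_positive_real_perturbation:
  fixes a c h :: "real poly"
  assumes a_stable: "hurwitz_stable a"
    and "degree c < degree a" "degree h = degree a" "lead_coeff h / lead_coeff a > 0"
    and c_pos: "\<forall>\<omega>. Re (freq_resp c a \<omega>) > 0"
  shows "\<exists>\<delta>0>0. \<forall>\<delta>. 0 < \<delta> \<and> \<delta> < \<delta>0 \<longrightarrow> strictly_positive_real (c + smult \<delta> h) a"
proof -
  have "eventually (\<lambda>\<omega>. Re (freq_resp h a \<omega>) \<ge> 0) at_infinity"
    using eventually_Re_freq_resp_pos[of h a] assms
    by (auto simp: hurwitz_stable_def elim: eventually_mono)
  then obtain \<delta>0 where "\<delta>0 > 0"
    and \<delta>0: "\<forall>\<delta>. 0 < \<delta> \<and> \<delta> < \<delta>0 \<longrightarrow> (\<forall>\<omega>. Re (freq_resp c a \<omega>) + \<delta> * Re (freq_resp h a \<omega>) > 0)"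
    using positive_under_small_perturbation[OF continuous_on_Re_freq_resp continuous_on_Re_freq_resp]
      a_stable c_pos by blast
  have "degree (c + smult \<delta> h) = degree a" if "\<delta> > 0" for \<delta>
    using assms that by (simp add: degree_add_eq_right)
  then show ?thesis
    using \<open>\<delta>0 > 0\<close> \<delta>0 a_stable
    unfolding strictly_positive_real_def Re_freq_resp_add_smult by auto
qed

theorem lemma4:
  fixes a b c h :: "real poly" and n :: nat
  assumes "n \<ge> 1"
    and "degree a = n" "lead_coeff a = 1" "hurwitz_stable a"
    and "degree b = n" "lead_coeff b = 1" "hurwitz_stable b"
    and "degree c = n - 1" "lead_coeff c = 1"
    and "\<forall>\<omega>::real. Re (poly (map_poly complex_of_real c) (\<i> * complex_of_real \<omega>) /
                       poly (map_poly complex_of_real a) (\<i> * complex_of_real \<omega>)) > 0"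
    and "\<forall>\<omega>::real. Re (poly (map_poly complex_of_real c) (\<i> * complex_of_real \<omega>) /
                       poly (map_poly complex_of_real b) (\<i> * complex_of_real \<omega>)) > 0"
    and "degree h = n" "lead_coeff h = 1"
  shows "\<exists>\<delta>0>0. \<forall>\<delta>. 0 < \<delta> \<and> \<delta> < \<delta>0 \<longrightarrow>
           strictly_positive_real (c + smult \<delta> h) a \<and>
           strictly_positive_real (c + smult \<delta> h) b"
proof -
  obtain \<delta>a where "\<delta>a > 0" "\<forall>\<delta>. 0 < \<delta> \<and> \<delta> < \<delta>a \<longrightarrow> strictly_positive_real (c + smult \<delta> h) a"
    using strictly_positive_real_perturbation[of a c h] assms by auto
  moreover obtain \<delta>b where "\<delta>b > 0" "\<forall>\<delta>. 0 < \<delta> \<and> \<delta> < \<delta>b \<longrightarrow> strictly_positive_real (c + smult \<delta> h) b"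
    using strictly_positive_real_perturbation[of b c h] assms by auto
  ultimately show ?thesis
    by (intro exI[of _ "min \<delta>a \<delta>b"]) auto
qed

end
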